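(* Let $F=(f_t)_{t\in\mathbb{R}}$ be a continuous flow on a compact metric space $X$, $\phi\colon X\to\mathbb{R}$ continuous, and $\mathcal{G}\subset X\times\mathbb{R}^+$. Suppose that $\mathcal{G}\cap(X\times[T_0,\infty))$ has (W)-specification at scale $\delta>0$ with maximum gap size $\tau$, and $\zeta>\delta$ is such that $\phi$ has the Bowen property on $\mathcal{G}$ at scale $\zeta$. Then for every $\gamma>2\zeta$ there is a constant $C_1>0$ such that for every $k\in\mathbb{N}$ and $t_1,\dots,t_k\ge T_0$, writing $T=\sum_{i=1}^kt_i+(k-1)\tau$ and $\theta=\zeta-\delta$, we have $$\prod_{j=1}^k\Lambda(\mathcal{G},\gamma,0,t_j)\le C_1^k\Lambda(X,\theta,0,T).$$
   Context: $\mathbb{R}^+=[0,\infty)$. $d_t(x,y)=\sup_{s\in[0,t]}d(f_sx,f_sy)$, $B_t(x,\eta)=\{y:d_t(x,y)<\eta\}$; $E$ is $(t,\delta)$-separated if $d_t(x,y)>\delta$ for distinct $x,y\in E$. $\mathcal{C}_t=\{x:(x,t)\in\mathcal{C}\}$; $\Phi_\eta(x,t)=\sup_{y\in B_t(x,\eta)}\int_0^t\phi(f_sy)ds$; $\Lambda(\mathcal{C},\delta,\eta,t)=\sup\{\sum_{x\in E}e^{\Phi_\eta(x,t)}:E\subset\mathcal{C}_t\ (t,\delta)\text{-separated}\}$, with $X$ meaning $\mathcal{C}=X\times\mathbb{R}^+$. A collection $\mathcal{G}'$ has (W)-specification at scale $\delta$ with maximum gap size $\tau$ if for every $\{(x_i,t_i)\}_{i=1}^k\subset\mathcal{G}'$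 there are $y\in X$ and $\tau_1,\dots,\tau_{k-1}\in[0,\tau]$ with $d_{t_j}(f_{s_{j-1}+\tau_{j-1}}y,x_j)<\delta$ for $1\le j\le k$, where $s_j=\sum_{i\le j}t_i+\sum_{i\le j-1}\tau_i$, $s_0=\tau_0=0$; and if two collections agree in their first $j$ entries then their gluing times agree for indices $<j$. $\phi$ has the Bowen property at scale $\zeta$ on $\mathcal{G}$ if there is $K$ with $\sup_{y\in B_t(x,\zeta)}|\Phi_0(x,t)-\Phi_0(y,t)|\le K$ for all $(x,t)\in\mathcal{G}$. *)

theory Defs
  imports "HOL-Analysis.Analysis"
begin

text \<open>Continuous flow on a compact metric space (the space X is the whole type).\<close>
definition is_cont_flow :: "(real \<Rightarrow> 'a::metric_space \<Rightarrow> 'a) \<Rightarrow> bool" where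
  "is_cont_flow f \<longleftrightarrow> continuous_on UNIV (\<lambda>p. f (fst p) (snd p))
     \<and> (\<forall>x. f 0 x = x) \<and> (\<forall>s t x. f (s + t) x = f s (f t x))"

definition bowen_dist :: "(real \<Rightarrow> 'a::metric_space \<Rightarrow> 'a) \<Rightarrow> real \<Rightarrow> 'a \<Rightarrow> 'a \<Rightarrow> real" where
  "bowen_dist f t x y = (SUP s\<in>{0..t}. dist (f s x) (f s y))"

definition bowen_ball :: "(real \<Rightarrow> 'a::metric_space \<Rightarrow> 'a) \<Rightarrow> real \<Rightarrow> 'a \<Rightarrow> real \<Rightarrow> 'a set" where
  "bowen_ball f t x \<eta> = {y. bowen_dist f t x y < \<eta>}"

definition separated :: "(real \<Rightarrow> 'a::metric_space \<Rightarrow> 'a) \<Rightarrow> real \<Rightarrow> real \<Rightarrow> 'a set \<Rightarrow> bool" where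
  "separated f t \<delta> E \<longleftrightarrow> (\<forall>x\<in>E. \<forall>y\<in>E. x \<noteq> y \<longrightarrow> bowen_dist f t x y > \<delta>)"

definition birkhoff_int :: "(real \<Rightarrow> 'a::metric_space \<Rightarrow> 'a) \<Rightarrow> ('a \<Rightarrow> real) \<Rightarrow> 'a \<Rightarrow> real \<Rightarrow> real" where
  "birkhoff_int f \<phi> y t = integral {0..t} (\<lambda>s. \<phi> (f s y))"

text \<open>\<Phi>_\<eta>(x,t); the point x itself is included so that \<Phi>_0(x,t) is the Birkhoff integral
  along x (standard convention; for \<eta> > 0 x already lies in the Bowen ball).\<close>
definition Phi :: "(real \<Rightarrow> 'a::metric_space \<Rightarrow> 'a) \<Rightarrow> ('a \<Rightarrow> real) \<Rightarrow> real \<Rightarrow> 'a \<Rightarrow> real \<Rightarrow> real" where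
  "Phi f \<phi> \<eta> x t = (SUP y \<in> insert x (bowen_ball f t x \<eta>). birkhoff_int f \<phi> y t)"

definition slice :: "('a \<times> real) set \<Rightarrow> real \<Rightarrow> 'a set" where
  "slice C t = {x. (x, t) \<in> C}"

definition Lambda :: "(real \<Rightarrow> 'a::metric_space \<Rightarrow> 'a) \<Rightarrow> ('a \<Rightarrow> real) \<Rightarrow> ('a \<times> real) set
    \<Rightarrow> real \<Rightarrow> real \<Rightarrow> real \<Rightarrow> real" where
  "Lambda f \<phi> C \<delta> \<eta> t = Sup {(\<Sum>x\<in>E. exp (Phi f \<phi> \<eta> x t)) | E.
      finite E \<and> E \<subseteq> slice C t \<and> separated f t \<delta> E}"

text \<open>Start time of the j-th orbit segment (0-indexed): sum_{i<j} t_i + sum_{i<j} tau_i.\<close>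
definition seg_start :: "('a \<times> real) list \<Rightarrow> (nat \<Rightarrow> real) \<Rightarrow> nat \<Rightarrow> real" where
  "seg_start xs g j = (\<Sum>i<j. snd (xs ! i)) + (\<Sum>i<j. g i)"

text \<open>The gluing times are given by a
  function of the (finite, nonempty) collection; g xs i is the gap between entries i and i+1
  (0-indexed), so it must only depend on the first i+2 entries.\<close>
definition W_spec :: "(real \<Rightarrow> 'a::metric_space \<Rightarrow> 'a) \<Rightarrow> ('a \<times> real) set \<Rightarrow> real \<Rightarrow> real \<Rightarrow> bool" where
  "W_spec f G' \<delta> \<tau> \<longleftrightarrow> (\<exists>g :: ('a \<times> real) list \<Rightarrow> nat \<Rightarrow> real.
     (\<forall>xs. xs \<noteq> [] \<and> set xs \<subseteq> G' \<longrightarrow>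
        (\<forall>i. i + 1 < length xs \<longrightarrow> 0 \<le> g xs i \<and> g xs i \<le> \<tau>) \<and>
        (\<exists>y. \<forall>j < length xs.
            bowen_dist f (snd (xs ! j)) (f (seg_start xs (g xs) j) y) (fst (xs ! j)) < \<delta>)) \<and>
     (\<forall>xs ys j. xs \<noteq> [] \<and> set xs \<subseteq> G' \<and> ys \<noteq> [] \<and> set ys \<subseteq> G' \<and>
        j \<le> length xs \<and> j \<le> length ys \<and> take j xs = take j ys \<longrightarrow>
        (\<forall>i. i + 1 < j \<longrightarrow> g xs i = g ys i)))"

definition bowen_property :: "(real \<Rightarrow> 'a::metric_space \<Rightarrow> 'a) \<Rightarrow> ('a \<Rightarrow> real) \<Rightarrow> ('a \<times> real) set \<Rightarrow> real \<Rightarrow> bool" where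
  "bowen_property f \<phi> G \<zeta> \<longleftrightarrow> (\<exists>K. \<forall>x t. (x, t) \<in> G \<longrightarrow>
      (\<forall>y \<in> bowen_ball f t x \<zeta>. \<bar>birkhoff_int f \<phi> x t - birkhoff_int f \<phi> y t\<bar> \<le> K))"

end

theory Submission
  imports Defs
begin

text \<open>Fix \<open>(t j, \<gamma>)\<close>-separated sets \<open>E j \<subseteq> slice G (t j)\<close>. By (W)-specification every choice
  \<open>c \<in> (\<Pi>\<^sub>E j<k. E j)\<close> is shadowed at scale \<open>\<delta>\<close> by a point \<open>y c\<close> whose orbit runs through the
  segments \<open>(c j, t j)\<close> with gaps in \<open>[0, \<tau>]\<close>; the Bowen property and \<open>\<bar>\<phi>\<bar> \<le> B\<close> bound the weight
  \<open>\<Prod>j<k. exp (S\<^sub>t\<^sub>j \<phi> (c j))\<close> by \<open>exp (K + \<tau> B)\<^sup>k \<cdot> exp (S\<^sub>T \<phi> (y c))\<close>.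
  Choose \<open>\<epsilon>\<close> so that the flow moves points by less than \<open>\<gamma> - 2\<zeta>\<close> in time \<open>\<epsilon>\<close>, and sort the choices into
  the at most \<open>(\<lfloor>\<tau>/\<epsilon>\<rfloor> + 1)\<^sup>k\<^sup>-\<^sup>1\<close> classes of gap vectors rounded down to multiples of \<open>\<epsilon>\<close>.
  Within a class the shadows are \<open>(T, \<zeta> - \<delta>)\<close>-separated: at the first index \<open>j\<close> where two choices
  differ, the consistency clause of (W)-specification makes the earlier gaps equal, so the starting
  times of the \<open>j\<close>-th segments differ by less than \<open>\<epsilon>\<close>, and \<open>(T, \<zeta> - \<delta>)\<close>-close shadows would make
  \<open>c j\<close> and \<open>c' j\<close> \<open>(\<gamma> - \<zeta> + \<delta>)\<close>-close. So each class contributes at most \<open>\<Lambda>(X, \<zeta> - \<delta>, 0, T)\<close>.\<close>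

lemma abs_diff_less_of_floor_divide_eq:
  fixes a b \<epsilon> :: real
  assumes "0 < \<epsilon>" "\<lfloor>a / \<epsilon>\<rfloor> = \<lfloor>b / \<epsilon>\<rfloor>"
  shows "\<bar>a - b\<bar> < \<epsilon>"
proof -
  have "\<bar>a / \<epsilon> - b / \<epsilon>\<bar> < 1"
    using assms(2) floor_correct[of "a / \<epsilon>"] floor_correct[of "b / \<epsilon>"] by linarith
  then show ?thesis using assms(1) by (simp add: diff_divide_distrib [symmetric] abs_divide)
qed

lemma sum_le_card_mult_by_classes:
  fixes w :: "'a \<Rightarrow> real"
  assumes "finite A" "finite B" "h ` A \<subseteq> B" "\<And>b. b \<in> B \<Longrightarrow> (\<Sum>a\<in>{a\<in>A. h a = b}. w a) \<le> L"
  shows "(\<Sum>a\<in>A. w a) \<le> real (card B) * L"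
proof -
  have "(\<Sum>a\<in>A. w a) = (\<Sum>b\<in>B. \<Sum>a\<in>{a\<in>A. h a = b}. w a)"
    by (rule sum.group[OF assms(1-3), symmetric])
  also have "\<dots> \<le> (\<Sum>b\<in>B. L)" using assms(4) by (rule sum_mono)
  finally show ?thesis by simp
qed

lemma prod_Sup_le:
  fixes A :: "nat \<Rightarrow> real set"
  assumes "\<And>j. j < k \<Longrightarrow> A j \<noteq> {}" "\<And>j. j < k \<Longrightarrow> bdd_above (A j)"
    and "\<And>j a. j < k \<Longrightarrow> a \<in> A j \<Longrightarrow> 0 \<le> a"
    and "0 \<le> M" "\<And>x. (\<And>j. j < k \<Longrightarrow> x j \<in> A j) \<Longrightarrow> (\<Prod>j<k. x j) \<le> M"
  shows "(\<Prod>j<k. Sup (A j)) \<le> M"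
  using assms
proof (induction k arbitrary: M)
  case 0
  then show ?case by simp
next
  case (Suc k)
  define P where "P = (\<Prod>j<k. Sup (A j))"
  have Sup_nonneg: "0 \<le> Sup (A j)" if "j < Suc k" for j
    using Suc.prems(1-3)[OF that] by (meson all_not_in_conv cSup_upper2)
  have "0 \<le> P" unfolding P_def using Sup_nonneg by (intro prod_nonneg) simp
  have P_mult_le: "P * a \<le> M" if a: "a \<in> A k" for a
  proof (cases "a = 0")
    case False
    then have "0 < a" using Suc.prems(3)[OF _ a] by force
    have "P \<le> M / a" unfolding P_def
    proof (rule Suc.IH)
      fix x assume x: "\<And>j. j < k \<Longrightarrow> x j \<in> A j"
      have "(x(k := a)) j \<in> A j" if "j < Suc k" for j
        using x a that by (auto simp: less_Suc_eq)
      then have "(\<Prod>j<Suc k. (x(k := a)) j) \<le> M" by (rule Suc.prems(5))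
      moreover have "(\<Prod>j<k. (x(k := a)) j) = (\<Prod>j<k. x j)" by (rule prod.cong) auto
      ultimately show "(\<Prod>j<k. x j) \<le> M / a" using \<open>0 < a\<close> by (simp add: pos_le_divide_eq)
    qed (simp_all add: Suc.prems(1,2,4) Suc.prems(3)[OF less_SucI] \<open>0 < a\<close> less_imp_le)
    then show ?thesis using \<open>0 < a\<close> by (simp add: pos_le_divide_eq)
  qed (use Suc.prems(4) in simp)
  have "P * Sup (A k) \<le> M"
  proof (cases "P = 0")
    case False
    then have "Sup (A k) \<le> M / P"
      using \<open>0 \<le> P\<close> P_mult_le Suc.prems(1)
      by (intro cSup_least) (auto simp: pos_le_divide_eq mult.commute)
    then show ?thesis using False \<open>0 \<le> P\<close> by (simp add: pos_le_divide_eq mult.commute)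
  qed (use Suc.prems(4) in simp)
  then show ?case by (simp add: P_def)
qed

lemma sum_integral_disjoint_intervals_le:
  fixes h :: "real \<Rightarrow> real"
  assumes h: "continuous_on UNIV h" "\<And>v. -B \<le> h v"
    and a: "0 \<le> a 0" "\<And>j. j < n \<Longrightarrow> 0 \<le> t j \<and> a j + t j \<le> a (Suc j)"
  shows "(\<Sum>j<n. integral {a j..a j + t j} h) \<le> integral {0..a n} h + B * (a n - (\<Sum>j<n. t j))"
proof -
  have combine: "integral {p..r} h = integral {p..q} h + integral {q..r} h" if "p \<le> q" "q \<le> r" for p q r
    using that by (intro Henstock_Kurzweil_Integration.integral_combine[symmetric]
        integrable_continuous_interval continuous_on_subset[OF h(1)]) auto
  have lower: "- B * (q - p) \<le> integral {p..q} h" if "p \<le> q" for p q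
  proof -
    have "integral {p..q} (\<lambda>_. - B) \<le> integral {p..q} h"
      using h by (intro integral_le integrable_continuous_interval continuous_on_subset[OF h(1)]) auto
    then show ?thesis using that by (simp add: mult.commute)
  qed
  have "0 \<le> a m \<and> (\<Sum>j<m. integral {a j..a j + t j} h) \<le> integral {0..a m} h + B * (a m - (\<Sum>j<m. t j))"
    if "m \<le> n" for m
    using that
  proof (induction m)
    case 0
    then show ?case using a(1) lower[of 0 "a 0"] by simp
  next
    case (Suc m)
    let ?s = "a m" and ?e = "a m + t m" and ?r = "a (Suc m)"
    have IH: "0 \<le> ?s" "(\<Sum>j<m. integral {a j..a j + t j} h) \<le> integral {0..?s} h + B * (?s - (\<Sum>j<m. t j))"
      using Suc by auto
    have step: "0 \<le> t m" "?e \<le> ?r" using a(2)[of m] Suc.prems by auto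
    have "integral {0..?r} h = integral {0..?s} h + integral {?s..?e} h + integral {?e..?r} h"
      using combine[of 0 ?s ?r] combine[of ?s ?e ?r] IH(1) step by simp
    then show ?case using IH step lower[of ?e ?r] by (simp add: algebra_simps)
  qed
  then show ?thesis by simp
qed

section \<open>Gluing orbit segments\<close>

definition glue_start :: "(nat \<Rightarrow> real) \<Rightarrow> (nat \<Rightarrow> real) \<Rightarrow> nat \<Rightarrow> real" where
  "glue_start t g j = (\<Sum>i<j. t i) + (\<Sum>i<j. g i)"

text \<open>\<open>y\<close> shadows the orbit segments \<open>(x j, t j)\<close>, \<open>j < k\<close>, glued with the gap \<open>g i\<close> between the
  segments \<open>i\<close> and \<open>i + 1\<close>; \<open>glue_start t g j\<close> is \<open>seg_start\<close> for segment lengths given as a function.\<close>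
definition shadows :: "(real \<Rightarrow> 'a::metric_space \<Rightarrow> 'a) \<Rightarrow> real \<Rightarrow> real \<Rightarrow> nat \<Rightarrow> (nat \<Rightarrow> real)
    \<Rightarrow> (nat \<Rightarrow> 'a) \<Rightarrow> (nat \<Rightarrow> real) \<Rightarrow> 'a \<Rightarrow> bool" where
  "shadows f \<delta> \<tau> k t x g y \<longleftrightarrow> (\<forall>i. i + 1 < k \<longrightarrow> 0 \<le> g i \<and> g i \<le> \<tau>) \<and>
     (\<forall>j<k. bowen_dist f (t j) (f (glue_start t g j) y) (x j) < \<delta>)"

lemma glue_start_Suc: "glue_start t g (Suc j) = glue_start t g j + t j + g j"
  by (simp add: glue_start_def)

lemma glue_start_bounds:
  assumes "j < k" "0 \<le> \<tau>" "\<And>i. i < k \<Longrightarrow> 0 \<le> t i" "\<And>i. i + 1 < k \<Longrightarrow> 0 \<le> g i \<and> g i \<le> \<tau>"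
  shows "0 \<le> glue_start t g j" "glue_start t g j + t j \<le> (\<Sum>i<k. t i) + (real k - 1) * \<tau>"
proof -
  show "0 \<le> glue_start t g j"
    unfolding glue_start_def using assms by (intro add_nonneg_nonneg sum_nonneg) auto
  have "(\<Sum>i<Suc j. t i) \<le> (\<Sum>i<k. t i)" using assms by (intro sum_mono2) auto
  moreover have "(\<Sum>i<j. g i) \<le> real j * \<tau>" using assms sum_bounded_above[of "{..<j}" g \<tau>] by auto
  moreover have "real j * \<tau> \<le> (real k - 1) * \<tau>" using assms(1,2) by (intro mult_right_mono) auto
  ultimately show "glue_start t g j + t j \<le> (\<Sum>i<k. t i) + (real k - 1) * \<tau>"
    unfolding glue_start_def by simp
qed

lemma glue_start_diff_less:
  assumes "0 < \<epsilon>" "\<And>i. i + 1 < j \<Longrightarrow> g i = g' i"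
    and "0 < j \<Longrightarrow> \<lfloor>g (j - 1) / \<epsilon>\<rfloor> = \<lfloor>g' (j - 1) / \<epsilon>\<rfloor>"
  shows "\<bar>glue_start t g j - glue_start t g' j\<bar> < \<epsilon>"
proof (cases j)
  case 0
  then show ?thesis using assms(1) by (simp add: glue_start_def)
next
  case (Suc m)
  have "(\<Sum>i<m. g i) = (\<Sum>i<m. g' i)" using assms(2) Suc by (intro sum.cong) auto
  moreover have "\<bar>g m - g' m\<bar> < \<epsilon>" using assms(1,3) Suc by (intro abs_diff_less_of_floor_divide_eq) auto
  ultimately show ?thesis using Suc by (simp add: glue_start_def)
qed

lemma W_specE:
  assumes "W_spec f G' \<delta> \<tau>"
  obtains g where "\<And>xs i. xs \<noteq> [] \<Longrightarrow> set xs \<subseteq> G' \<Longrightarrow> i + 1 < length xs \<Longrightarrow> 0 \<le> g xs i \<and> g xs i \<le> \<tau>"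
    and "\<And>xs. xs \<noteq> [] \<Longrightarrow> set xs \<subseteq> G' \<Longrightarrow>
      \<exists>y. \<forall>j < length xs. bowen_dist f (snd (xs ! j)) (f (seg_start xs (g xs) j) y) (fst (xs ! j)) < \<delta>"
    and "\<And>xs ys j i. xs \<noteq> [] \<Longrightarrow> set xs \<subseteq> G' \<Longrightarrow> ys \<noteq> [] \<Longrightarrow> set ys \<subseteq> G' \<Longrightarrow>
      j \<le> length xs \<Longrightarrow> j \<le> length ys \<Longrightarrow> take j xs = take j ys \<Longrightarrow> i + 1 < j \<Longrightarrow> g xs i = g ys i"
proof -
  from assms obtain g where
    spec: "\<forall>xs. xs \<noteq> [] \<and> set xs \<subseteq> G' \<longrightarrow> (\<forall>i. i + 1 < length xs \<longrightarrow> 0 \<le> g xs i \<and> g xs i \<le> \<tau>) \<and>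
        (\<exists>y. \<forall>j < length xs. bowen_dist f (snd (xs ! j)) (f (seg_start xs (g xs) j) y) (fst (xs ! j)) < \<delta>)"
    and prefix: "\<forall>xs ys j. xs \<noteq> [] \<and> set xs \<subseteq> G' \<and> ys \<noteq> [] \<and> set ys \<subseteq> G' \<and>
        j \<le> length xs \<and> j \<le> length ys \<and> take j xs = take j ys \<longrightarrow> (\<forall>i. i + 1 < j \<longrightarrow> g xs i = g ys i)"
    unfolding W_spec_def by (elim exE conjE)
  show ?thesis
    using spec prefix by (intro that[of g]) (meson, meson, meson)
qed

lemma W_spec_gap_nonneg:
  assumes "W_spec f G' \<delta> \<tau>" "p \<in> G'"
  shows "0 \<le> \<tau>"
proof (rule W_specE[OF assms(1)])
  fix g assume "\<And>xs i. xs \<noteq> [] \<Longrightarrow> set xs \<subseteq> G' \<Longrightarrow> i + 1 < length xs \<Longrightarrow> 0 \<le> g xs i \<and> g xs i \<le> \<tau>"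
  from this[of "[p, p]" 0] assms(2) show ?thesis by simp
qed

lemma W_spec_shadowing:
  fixes t :: "nat \<Rightarrow> real" and P :: "(nat \<Rightarrow> 'a::metric_space) set"
  assumes "W_spec f G' \<delta> \<tau>" "1 \<le> k" and adm: "\<And>c j. c \<in> P \<Longrightarrow> j < k \<Longrightarrow> (c j, t j) \<in> G'"
  obtains g :: "(nat \<Rightarrow> 'a) \<Rightarrow> nat \<Rightarrow> real" and y :: "(nat \<Rightarrow> 'a) \<Rightarrow> 'a"
  where "\<And>c. c \<in> P \<Longrightarrow> shadows f \<delta> \<tau> k t c (g c) (y c)"
    and "\<And>c c' j i. c \<in> P \<Longrightarrow> c' \<in> P \<Longrightarrow> j \<le> k \<Longrightarrow> (\<And>i. i < j \<Longrightarrow> c i = c' i) \<Longrightarrow> i + 1 < j \<Longrightarrow>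
      g c i = g c' i"
proof (rule W_specE[OF assms(1)])
  fix gl :: "('a \<times> real) list \<Rightarrow> nat \<Rightarrow> real"
  assume gl_gap: "\<And>xs i. xs \<noteq> [] \<Longrightarrow> set xs \<subseteq> G' \<Longrightarrow> i + 1 < length xs \<Longrightarrow> 0 \<le> gl xs i \<and> gl xs i \<le> \<tau>"
    and gl_shadow: "\<And>xs. xs \<noteq> [] \<Longrightarrow> set xs \<subseteq> G' \<Longrightarrow>
      \<exists>y. \<forall>j < length xs. bowen_dist f (snd (xs ! j)) (f (seg_start xs (gl xs) j) y) (fst (xs ! j)) < \<delta>"
    and gl_prefix: "\<And>xs ys j i. xs \<noteq> [] \<Longrightarrow> set xs \<subseteq> G' \<Longrightarrow> ys \<noteq> [] \<Longrightarrow> set ys \<subseteq> G' \<Longrightarrow>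
      j \<le> length xs \<Longrightarrow> j \<le> length ys \<Longrightarrow> take j xs = take j ys \<Longrightarrow> i + 1 < j \<Longrightarrow> gl xs i = gl ys i"
  define segs where "segs c = map (\<lambda>j. (c j, t j)) [0..<k]" for c :: "nat \<Rightarrow> 'a"
  have segs_ne: "segs c \<noteq> []" and segs_in: "set (segs c) \<subseteq> G'" if "c \<in> P" for c
    using that adm assms(2) by (auto simp: segs_def)
  have start: "seg_start (segs c) h j = glue_start t h j" if "j \<le> k" for c h j
    unfolding seg_start_def glue_start_def segs_def using that by (auto intro!: sum.cong)
  define y where "y c = (SOME y. \<forall>j<k. bowen_dist f (t j) (f (glue_start t (gl (segs c)) j) y) (c j) < \<delta>)"
    for c
  show thesis
  proof (rule that[of "\<lambda>c. gl (segs c)" y])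
    fix c assume "c \<in> P"
    have "\<exists>y. \<forall>j<k. bowen_dist f (t j) (f (glue_start t (gl (segs c)) j) y) (c j) < \<delta>"
      using gl_shadow[OF segs_ne segs_in, OF \<open>c \<in> P\<close> \<open>c \<in> P\<close>] start by (simp add: segs_def)
    then have "\<forall>j<k. bowen_dist f (t j) (f (glue_start t (gl (segs c)) j) (y c)) (c j) < \<delta>"
      unfolding y_def by (rule someI_ex)
    then show "shadows f \<delta> \<tau> k t c (gl (segs c)) (y c)"
      unfolding shadows_def using gl_gap[OF segs_ne segs_in, OF \<open>c \<in> P\<close> \<open>c \<in> P\<close>]
      by (simp add: segs_def)
  next
    fix c c' j i
    assume "c \<in> P" "c' \<in> P" "j \<le> k" "\<And>i. i < j \<Longrightarrow> c i = c' i" "i + 1 < j"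
    moreover have "take j (segs c) = take j (segs c')"
      unfolding segs_def take_map using \<open>j \<le> k\<close> \<open>\<And>i. i < j \<Longrightarrow> c i = c' i\<close> by (auto simp: min_def)
    ultimately show "gl (segs c) i = gl (segs c') i"
      using gl_prefix segs_ne segs_in by (simp add: segs_def)
  qed
qed

section \<open>Flows on compact metric spaces\<close>

lemma bowen_dist_commute: "bowen_dist f t x y = bowen_dist f t y x"
  unfolding bowen_dist_def by (simp add: dist_commute)

lemma bowen_dist_self: "0 \<le> t \<Longrightarrow> bowen_dist f t x x = 0"
  unfolding bowen_dist_def by simp

lemma bowen_dist_le:
  assumes "0 \<le> t" "\<And>s. s \<in> {0..t} \<Longrightarrow> dist (f s x) (f s y) \<le> c"
  shows "bowen_dist f t x y \<le> c"
  unfolding bowen_dist_def using assms by (intro cSUP_least) auto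

locale compact_flow =
  fixes f :: "real \<Rightarrow> 'a::metric_space \<Rightarrow> 'a"
  assumes compact_space: "compact (UNIV :: 'a set)"
    and is_cont_flow: "is_cont_flow f"
begin

lemma flow_zero: "f 0 x = x"
  using is_cont_flow unfolding is_cont_flow_def by blast

lemma flow_add: "f (s + t) x = f s (f t x)"
  using is_cont_flow unfolding is_cont_flow_def by blast

lemma continuous_on_flow: "continuous_on UNIV (\<lambda>p. f (fst p) (snd p))"
  using is_cont_flow unfolding is_cont_flow_def by blast

lemma dist_le_bowen_dist:
  assumes "s \<in> {0..t}"
  shows "dist (f s x) (f s y) \<le> bowen_dist f t x y"
proof -
  obtain D where "\<forall>x\<in>UNIV :: 'a set. \<forall>y\<in>UNIV. dist x y \<le> D"
    using compact_imp_bounded[OF compact_space] unfolding bounded_two_points by blast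
  then show ?thesis
    unfolding bowen_dist_def using assms by (intro cSUP_upper bdd_aboveI2) auto
qed

lemma bowen_dist_nonneg: "0 \<le> t \<Longrightarrow> 0 \<le> bowen_dist f t x y"
  using dist_le_bowen_dist[of 0 t x y] by (auto intro: order_trans[OF zero_le_dist])

lemma Phi_zero_radius:
  assumes "0 \<le> t"
  shows "Phi f \<phi> 0 x t = birkhoff_int f \<phi> x t"
proof -
  have "bowen_ball f t x 0 = {}"
    unfolding bowen_ball_def using bowen_dist_nonneg[OF assms] by (simp add: not_less)
  then show ?thesis unfolding Phi_def by simp
qed

lemma uniformly_continuous_flow_on_strip:
  "uniformly_continuous_on ({0..L} \<times> UNIV) (\<lambda>p. f (fst p) (snd p))"
  by (intro compact_uniformly_continuous continuous_on_subset[OF continuous_on_flow])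
    (auto simp: compact_Times compact_space)

lemma flow_small_time_dist:
  assumes "0 < \<eta>"
  obtains \<epsilon> where "0 < \<epsilon>" "\<And>z h. 0 \<le> h \<Longrightarrow> h < \<epsilon> \<Longrightarrow> dist (f h z) z < \<eta>"
proof -
  obtain d where d: "0 < d" and uc: "\<And>p q. p \<in> {0..1} \<times> UNIV \<Longrightarrow> q \<in> {0..1} \<times> UNIV \<Longrightarrow>
      dist q p < d \<Longrightarrow> dist (f (fst q) (snd q)) (f (fst p) (snd p)) < \<eta>"
    using uniformly_continuous_flow_on_strip[of 1] assms unfolding uniformly_continuous_on_def by metis
  have "dist (f h z) z < \<eta>" if "0 \<le> h" "h < min d 1" for z h
    using uc[of "(0, z)" "(h, z)"] that by (simp add: dist_Pair_Pair flow_zero)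
  with d show ?thesis using that[of "min d 1"] by simp
qed

lemma dist_flow_close_times:
  assumes small: "\<And>z h. 0 \<le> h \<Longrightarrow> h < \<epsilon> \<Longrightarrow> dist (f h z) z < \<eta>" and "\<bar>s - s'\<bar> < \<epsilon>"
  shows "dist (f s z) (f s' z) < \<eta>"
proof (cases "s \<le> s'")
  case True
  have "f s' z = f (s' - s) (f s z)" by (simp flip: flow_add)
  then show ?thesis using small[of "s' - s" "f s z"] True assms(2) by (simp add: dist_commute)
next
  case False
  have "f s z = f (s - s') (f s' z)" by (simp flip: flow_add)
  then show ?thesis using small[of "s - s'" "f s' z"] False assms(2) by simp
qed

text \<open>A \<open>(T, \<theta>)\<close>-separated set has at most one point in each ball of a finite cover by balls
  of radius \<open>\<rho>/2\<close>, where \<open>\<rho>\<close> is a modulus of uniform continuity of the flow on \<open>[0, T]\<close>.\<close>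
lemma card_separated_bounded:
  assumes "0 < \<theta>" "0 \<le> T"
  obtains N where "\<And>E. finite E \<Longrightarrow> separated f T \<theta> E \<Longrightarrow> card E \<le> N"
proof -
  obtain \<rho> where \<rho>: "0 < \<rho>" and uc: "\<And>p q. p \<in> {0..T} \<times> UNIV \<Longrightarrow> q \<in> {0..T} \<times> UNIV \<Longrightarrow>
      dist q p < \<rho> \<Longrightarrow> dist (f (fst q) (snd q)) (f (fst p) (snd p)) < \<theta>"
    using uniformly_continuous_flow_on_strip[of T] assms unfolding uniformly_continuous_on_def by metis
  have cover: "(UNIV :: 'a set) \<subseteq> (\<Union>c. ball c (\<rho>/2))"
  proof
    fix x :: 'a
    have "x \<in> ball x (\<rho>/2)" using \<rho> by simp
    then show "x \<in> (\<Union>c. ball c (\<rho>/2))" by blast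
  qed
  obtain D where "finite D" and D: "(UNIV :: 'a set) \<subseteq> (\<Union>c\<in>D. ball c (\<rho>/2))"
    by (rule compactE_image[OF compact_space _ cover]) auto
  have "\<forall>x. \<exists>c. c \<in> D \<and> x \<in> ball c (\<rho>/2)"
    using D by blast
  then obtain center where center: "\<And>x. center x \<in> D \<and> x \<in> ball (center x) (\<rho>/2)"
    by metis
  have "card E \<le> card D" if "finite E" "separated f T \<theta> E" for E
  proof -
    have "inj_on center E"
    proof (rule inj_onI, rule ccontr)
      fix x y assume xy: "x \<in> E" "y \<in> E" "center x = center y" "x \<noteq> y"
      have "dist x y < \<rho>"
        using center[of x] center[of y] xy(3) dist_triangle2[of x y "center x"]
        by (simp add: dist_commute)
      then have "dist (f s x) (f s y) \<le> \<theta>" if "s \<in> {0..T}" for s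
        using uc[of "(s, y)" "(s, x)"] that by (simp add: dist_Pair_Pair dist_commute)
      then have "bowen_dist f T x y \<le> \<theta>"
        using bowen_dist_le[OF \<open>0 \<le> T\<close>] by blast
      then show False using that(2) xy unfolding separated_def by force
    qed
    then show ?thesis using card_inj_on_le[of center E D] center \<open>finite D\<close> by auto
  qed
  then show ?thesis using that by blast
qed

section \<open>Pressure sums\<close>

lemma potential_bounded:
  fixes \<phi> :: "'a \<Rightarrow> real"
  assumes "continuous_on UNIV \<phi>"
  obtains B where "\<And>x. \<bar>\<phi> x\<bar> \<le> B"
proof -
  have "bounded (\<phi> ` UNIV)"
    using compact_imp_bounded[OF compact_continuous_image[OF assms compact_space]] .
  then show ?thesis using that unfolding bounded_iff by auto
qed

lemma continuous_on_potential_orbit: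
  assumes "continuous_on UNIV \<phi>"
  shows "continuous_on S (\<lambda>s. \<phi> (f s y))"
proof -
  have "continuous_on UNIV (\<lambda>s. f s y)"
    using continuous_on_compose2[OF continuous_on_flow, of UNIV "\<lambda>s. (s, y)"]
    by (simp add: continuous_on_Pair continuous_on_id continuous_on_const)
  then show ?thesis
    using continuous_on_compose2[OF assms] continuous_on_subset by blast
qed

lemma birkhoff_int_le:
  assumes "continuous_on UNIV \<phi>" "\<And>x. \<bar>\<phi> x\<bar> \<le> B" "0 \<le> t"
  shows "birkhoff_int f \<phi> y t \<le> B * t"
proof -
  have "birkhoff_int f \<phi> y t \<le> integral {0..t} (\<lambda>_. B)"
    unfolding birkhoff_int_def using assms
    by (intro integral_le integrable_continuous_interval continuous_on_potential_orbit)
      (auto simp: abs_le_iff)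
  then show ?thesis using assms(3) by (simp add: mult.commute)
qed

lemma birkhoff_int_flow: "birkhoff_int f \<phi> (f a y) t = integral {a..a + t} (\<lambda>s. \<phi> (f s y))"
proof -
  have "birkhoff_int f \<phi> (f a y) t = integral {0..t} ((\<lambda>s. \<phi> (f s y)) \<circ> (+) a)"
    unfolding birkhoff_int_def o_def by (simp add: flow_add [symmetric] add.commute)
  also have "\<dots> = integral {0 + a..t + a} (\<lambda>s. \<phi> (f s y))" by (rule integral_shift_Icc_real)
  finally show ?thesis by (simp add: add.commute)
qed

lemma Lambda_set_bdd_above:
  assumes "continuous_on UNIV \<phi>" "0 < \<theta>" "C \<subseteq> UNIV \<times> {0..}"
  shows "bdd_above {\<Sum>x\<in>E. exp (Phi f \<phi> 0 x T) | E. finite E \<and> E \<subseteq> slice C T \<and> separated f T \<theta> E}"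
proof (cases "0 \<le> T")
  case False
  then have "slice C T = {}" using assms(3) unfolding slice_def by auto
  then show ?thesis by (auto intro: bdd_aboveI[of _ 0])
next
  case True
  obtain B where B: "\<And>x. \<bar>\<phi> x\<bar> \<le> B" using potential_bounded[OF assms(1)] by blast
  obtain N where N: "\<And>E. finite E \<Longrightarrow> separated f T \<theta> E \<Longrightarrow> card E \<le> N"
    using card_separated_bounded[OF assms(2) True] by blast
  show ?thesis
  proof (rule bdd_aboveI[of _ "N * exp (B * T)"], safe)
    fix E assume E: "finite E" "E \<subseteq> slice C T" "separated f T \<theta> E"
    have "(\<Sum>x\<in>E. exp (Phi f \<phi> 0 x T)) \<le> card E * exp (B * T)"
      using Phi_zero_radius[OF True] birkhoff_int_le[OF assms(1) B True] by (intro sum_bounded_above) auto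
    also have "\<dots> \<le> N * exp (B * T)" using N[OF E(1,3)] by (intro mult_right_mono) auto
    finally show "(\<Sum>x\<in>E. exp (Phi f \<phi> 0 x T)) \<le> N * exp (B * T)" .
  qed
qed

lemma sum_le_Lambda:
  assumes "continuous_on UNIV \<phi>" "0 < \<theta>" "C \<subseteq> UNIV \<times> {0..}"
    and "finite E" "E \<subseteq> slice C T" "separated f T \<theta> E"
  shows "(\<Sum>x\<in>E. exp (Phi f \<phi> 0 x T)) \<le> Lambda f \<phi> C \<theta> 0 T"
  unfolding Lambda_def using assms Lambda_set_bdd_above[OF assms(1-3)] by (intro cSup_upper) auto

lemma Lambda_nonneg:
  assumes "continuous_on UNIV \<phi>" "0 < \<theta>" "C \<subseteq> UNIV \<times> {0..}"
  shows "0 \<le> Lambda f \<phi> C \<theta> 0 T"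
  using sum_le_Lambda[OF assms, of "{}"] by (simp add: separated_def)

lemma prod_Lambda_le:
  fixes t :: "nat \<Rightarrow> real"
  assumes "continuous_on UNIV \<phi>" "0 < \<theta>" "C \<subseteq> UNIV \<times> {0..}" "0 \<le> M"
    and bound: "\<And>E. (\<And>j. j < k \<Longrightarrow> finite (E j) \<and> E j \<subseteq> slice C (t j) \<and> separated f (t j) \<theta> (E j)) \<Longrightarrow>
      (\<Prod>j<k. \<Sum>x\<in>E j. exp (Phi f \<phi> 0 x (t j))) \<le> M"
  shows "(\<Prod>j<k. Lambda f \<phi> C \<theta> 0 (t j)) \<le> M"
  unfolding Lambda_def
proof (rule prod_Sup_le[where A = "\<lambda>j. {\<Sum>x\<in>E. exp (Phi f \<phi> 0 x (t j)) | E.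
    finite E \<and> E \<subseteq> slice C (t j) \<and> separated f (t j) \<theta> E}"])
  fix x assume "\<And>j. j < k \<Longrightarrow> x j \<in> {\<Sum>x\<in>E. exp (Phi f \<phi> 0 x (t j)) | E.
      finite E \<and> E \<subseteq> slice C (t j) \<and> separated f (t j) \<theta> E}"
  then have "\<forall>j. \<exists>E. j < k \<longrightarrow> x j = (\<Sum>x\<in>E. exp (Phi f \<phi> 0 x (t j))) \<and>
      finite E \<and> E \<subseteq> slice C (t j) \<and> separated f (t j) \<theta> E" by blast
  then obtain E where E: "\<And>j. j < k \<Longrightarrow> x j = (\<Sum>x\<in>E j. exp (Phi f \<phi> 0 x (t j))) \<and>
      finite (E j) \<and> E j \<subseteq> slice C (t j) \<and> separated f (t j) \<theta> (E j)" by metis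
  then have "(\<Prod>j<k. x j) = (\<Prod>j<k. \<Sum>x\<in>E j. exp (Phi f \<phi> 0 x (t j)))" by (intro prod.cong) auto
  also have "\<dots> \<le> M" using E by (intro bound) auto
  finally show "(\<Prod>j<k. x j) \<le> M" .
qed (use Lambda_set_bdd_above[OF assms(1-3)] \<open>0 \<le> M\<close> in
    \<open>auto intro: sum_nonneg exI[of _ "{}"] simp: separated_def\<close>)

lemma sum_exp_birkhoff_le_Lambda:
  assumes "continuous_on UNIV \<phi>" "0 < \<theta>" "0 \<le> T" "finite I"
    and sep: "\<And>i i'. i \<in> I \<Longrightarrow> i' \<in> I \<Longrightarrow> i \<noteq> i' \<Longrightarrow> \<theta> < bowen_dist f T (y i) (y i')"
  shows "(\<Sum>i\<in>I. exp (birkhoff_int f \<phi> (y i) T)) \<le> Lambda f \<phi> (UNIV \<times> {0..}) \<theta> 0 T"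
proof -
  have "inj_on y I"
  proof (rule inj_onI, rule ccontr)
    fix i i' assume "i \<in> I" "i' \<in> I" "y i = y i'" "i \<noteq> i'"
    then have "\<theta> < bowen_dist f T (y i) (y i)" using sep by metis
    then show False using assms(2) by (simp add: bowen_dist_self[OF assms(3)])
  qed
  then have "(\<Sum>i\<in>I. exp (birkhoff_int f \<phi> (y i) T)) = (\<Sum>x\<in>y ` I. exp (Phi f \<phi> 0 x T))"
    by (simp add: sum.reindex Phi_zero_radius[OF assms(3)])
  also have "\<dots> \<le> Lambda f \<phi> (UNIV \<times> {0..}) \<theta> 0 T"
  proof (rule sum_le_Lambda)
    show "separated f T \<theta> (y ` I)"
      unfolding separated_def using sep by blast
  qed (use assms in \<open>auto simp: slice_def\<close>)
  finally show ?thesis .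
qed

section \<open>Shadowing estimates\<close>

lemma bowen_dist_le_of_shadowing:
  assumes x: "bowen_dist f t (f s y) x < \<delta>" and x': "bowen_dist f t (f s' y') x' < \<delta>"
    and small: "\<And>z h. 0 \<le> h \<Longrightarrow> h < \<epsilon> \<Longrightarrow> dist (f h z) z < \<eta>" and "\<bar>s - s'\<bar> < \<epsilon>"
    and "0 \<le> t" "0 \<le> s'" "s' + t \<le> T" and yy': "bowen_dist f T y y' \<le> \<theta>"
  shows "bowen_dist f t x x' \<le> 2 * \<delta> + \<eta> + \<theta>"
proof (rule bowen_dist_le[OF \<open>0 \<le> t\<close>])
  fix u assume u: "u \<in> {0..t}"
  have "dist (f u x) (f (u + s) y) < \<delta>"
    using dist_le_bowen_dist[OF u, of "f s y" x] x by (simp add: flow_add dist_commute)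
  moreover have "dist (f (u + s) y) (f (u + s') y) < \<eta>"
    using dist_flow_close_times[OF small] \<open>\<bar>s - s'\<bar> < \<epsilon>\<close> by simp
  moreover have "dist (f (u + s') y) (f (u + s') y') \<le> \<theta>"
    using dist_le_bowen_dist[of "u + s'" T y y'] u assms(6,7) yy' by auto
  moreover have "dist (f (u + s') y') (f u x') < \<delta>"
    using dist_le_bowen_dist[OF u, of "f s' y'" x'] x' by (simp add: flow_add)
  ultimately show "dist (f u x) (f u x') \<le> 2 * \<delta> + \<eta> + \<theta>"
    using dist_triangle[of "f u x" "f u x'" "f (u + s) y"] dist_triangle[of "f (u + s) y" "f u x'" "f (u + s') y"]
      dist_triangle[of "f (u + s') y" "f u x'" "f (u + s') y'"]
    by linarith
qed

lemma shadows_separated_at: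
  assumes sh: "shadows f \<delta> \<tau> k t x g y" "shadows f \<delta> \<tau> k t x' g' y'"
    and small: "0 < \<epsilon>" "\<And>z h. 0 \<le> h \<Longrightarrow> h < \<epsilon> \<Longrightarrow> dist (f h z) z < \<gamma> - 2 * \<zeta>"
    and "\<delta> < \<zeta>" "0 \<le> \<tau>" "\<And>i. i < k \<Longrightarrow> 0 \<le> t i" "j < k"
    and "\<And>i. i + 1 < j \<Longrightarrow> g i = g' i" "0 < j \<Longrightarrow> \<lfloor>g (j - 1) / \<epsilon>\<rfloor> = \<lfloor>g' (j - 1) / \<epsilon>\<rfloor>"
    and sep: "\<gamma> < bowen_dist f (t j) (x j) (x' j)"
  shows "\<zeta> - \<delta> < bowen_dist f ((\<Sum>i<k. t i) + (real k - 1) * \<tau>) y y'"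
proof (rule ccontr)
  assume "\<not> ?thesis"
  then have close: "bowen_dist f ((\<Sum>i<k. t i) + (real k - 1) * \<tau>) y y' \<le> \<zeta> - \<delta>" by simp
  have gaps': "\<And>i. i + 1 < k \<Longrightarrow> 0 \<le> g' i \<and> g' i \<le> \<tau>" using sh(2) unfolding shadows_def by blast
  have "bowen_dist f (t j) (x j) (x' j) \<le> 2 * \<delta> + (\<gamma> - 2 * \<zeta>) + (\<zeta> - \<delta>)"
  proof (rule bowen_dist_le_of_shadowing[OF _ _ small(2)])
    show "bowen_dist f (t j) (f (glue_start t g j) y) (x j) < \<delta>"
      "bowen_dist f (t j) (f (glue_start t g' j) y') (x' j) < \<delta>"
      using sh \<open>j < k\<close> unfolding shadows_def by blast+
    show "\<bar>glue_start t g j - glue_start t g' j\<bar> < \<epsilon>"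
      using small(1) assms(9,10) by (intro glue_start_diff_less) auto
  qed (use glue_start_bounds[OF \<open>j < k\<close> \<open>0 \<le> \<tau>\<close> assms(7) gaps'] assms(7) \<open>j < k\<close> close in auto)
  then show False using sep \<open>\<delta> < \<zeta>\<close> by linarith
qed

lemma shadows_separated:
  assumes sh: "shadows f \<delta> \<tau> k t x g y" "shadows f \<delta> \<tau> k t x' g' y'"
    and small: "0 < \<epsilon>" "\<And>z h. 0 \<le> h \<Longrightarrow> h < \<epsilon> \<Longrightarrow> dist (f h z) z < \<gamma> - 2 * \<zeta>"
    and "\<delta> < \<zeta>" "0 \<le> \<tau>" "\<And>i. i < k \<Longrightarrow> 0 \<le> t i"
    and x: "x \<in> (\<Pi>\<^sub>E j\<in>{..<k}. E j)" "x' \<in> (\<Pi>\<^sub>E j\<in>{..<k}. E j)" "x \<noteq> x'"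
    and E: "\<And>j. j < k \<Longrightarrow> separated f (t j) \<gamma> (E j)"
    and prefix: "\<And>j i. j \<le> k \<Longrightarrow> (\<And>i. i < j \<Longrightarrow> x i = x' i) \<Longrightarrow> i + 1 < j \<Longrightarrow> g i = g' i"
    and bins: "\<And>i. i + 1 < k \<Longrightarrow> \<lfloor>g i / \<epsilon>\<rfloor> = \<lfloor>g' i / \<epsilon>\<rfloor>"
  shows "\<zeta> - \<delta> < bowen_dist f ((\<Sum>i<k. t i) + (real k - 1) * \<tau>) y y'"
proof -
  have "\<exists>j. x j \<noteq> x' j" using x(3) by (auto simp: fun_eq_iff)
  then have "\<exists>j. x j \<noteq> x' j \<and> (\<forall>i<j. \<not> x i \<noteq> x' i)" by (rule exists_least_iff[THEN iffD1])
  then obtain j where j: "x j \<noteq> x' j" "\<And>i. i < j \<Longrightarrow> x i = x' i" by blast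
  have "j < k"
  proof (rule ccontr)
    assume "\<not> j < k"
    then have "x j = x' j" using PiE_arb[OF x(1)] PiE_arb[OF x(2)] by simp
    with j(1) show False by simp
  qed
  have "x j \<in> E j" "x' j \<in> E j" using PiE_mem[OF x(1)] PiE_mem[OF x(2)] \<open>j < k\<close> by auto
  then have "\<gamma> < bowen_dist f (t j) (x j) (x' j)"
    using E[OF \<open>j < k\<close>] j(1) unfolding separated_def by blast
  moreover have "g i = g' i" if "i + 1 < j" for i
    using prefix[OF _ j(2) that] \<open>j < k\<close> by simp
  moreover have "\<lfloor>g (j - 1) / \<epsilon>\<rfloor> = \<lfloor>g' (j - 1) / \<epsilon>\<rfloor>" if "0 < j"
    using bins[of "j - 1"] that \<open>j < k\<close> by simp
  ultimately show ?thesis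
    by (intro shadows_separated_at[OF sh small \<open>\<delta> < \<zeta>\<close> \<open>0 \<le> \<tau>\<close> assms(7) \<open>j < k\<close>])
qed

lemma birkhoff_sum_le_glued_orbit:
  assumes \<phi>: "continuous_on UNIV \<phi>" "\<And>x. \<bar>\<phi> x\<bar> \<le> B"
    and "1 \<le> k" "0 \<le> \<tau>" "\<And>j. j < k \<Longrightarrow> 0 \<le> t j" and gaps: "\<And>i. i + 1 < k \<Longrightarrow> 0 \<le> g i \<and> g i \<le> \<tau>"
  shows "(\<Sum>j<k. birkhoff_int f \<phi> (f (glue_start t g j) y) (t j))
    \<le> birkhoff_int f \<phi> y ((\<Sum>j<k. t j) + (real k - 1) * \<tau>) + (real k - 1) * \<tau> * B"
proof -
  define T where "T = (\<Sum>j<k. t j) + (real k - 1) * \<tau>"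
  define a where "a = (glue_start t g)(k := T)"
  have "(\<Sum>j<k. integral {a j..a j + t j} (\<lambda>s. \<phi> (f s y)))
      \<le> integral {0..a k} (\<lambda>s. \<phi> (f s y)) + B * (a k - (\<Sum>j<k. t j))"
  proof (rule sum_integral_disjoint_intervals_le)
    show "continuous_on UNIV (\<lambda>s. \<phi> (f s y))" by (rule continuous_on_potential_orbit[OF \<phi>(1)])
    show "- B \<le> \<phi> (f s y)" for s using \<phi>(2)[of "f s y"] by linarith
    show "0 \<le> a 0" using \<open>1 \<le> k\<close> by (simp add: a_def glue_start_def)
    show "0 \<le> t j \<and> a j + t j \<le> a (Suc j)" if "j < k" for j
      using that assms(5) gaps glue_start_bounds(2)[OF that \<open>0 \<le> \<tau>\<close> assms(5) gaps]
      by (auto simp: a_def T_def glue_start_Suc)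
  qed
  moreover have "(\<Sum>j<k. integral {a j..a j + t j} (\<lambda>s. \<phi> (f s y)))
      = (\<Sum>j<k. birkhoff_int f \<phi> (f (glue_start t g j) y) (t j))"
    by (simp add: a_def birkhoff_int_flow)
  ultimately show ?thesis by (simp add: a_def T_def birkhoff_int_def algebra_simps)
qed

lemma prod_exp_birkhoff_le_shadow:
  assumes \<phi>: "continuous_on UNIV \<phi>" "\<And>x. \<bar>\<phi> x\<bar> \<le> B"
    and bowen: "\<And>x s y. (x, s) \<in> G \<Longrightarrow> y \<in> bowen_ball f s x \<zeta> \<Longrightarrow>
      \<bar>birkhoff_int f \<phi> x s - birkhoff_int f \<phi> y s\<bar> \<le> K"
    and sh: "shadows f \<delta> \<tau> k t x g y" and "\<delta> < \<zeta>" and G: "\<And>j. j < k \<Longrightarrow> (x j, t j) \<in> G"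
    and "1 \<le> k" "0 \<le> \<tau>" "\<And>j. j < k \<Longrightarrow> 0 \<le> t j"
  shows "(\<Prod>j<k. exp (birkhoff_int f \<phi> (x j) (t j)))
    \<le> exp (K + \<tau> * B) ^ k * exp (birkhoff_int f \<phi> y ((\<Sum>j<k. t j) + (real k - 1) * \<tau>))"
proof -
  define T where "T = (\<Sum>j<k. t j) + (real k - 1) * \<tau>"
  have gaps: "\<And>i. i + 1 < k \<Longrightarrow> 0 \<le> g i \<and> g i \<le> \<tau>" using sh unfolding shadows_def by blast
  have close: "birkhoff_int f \<phi> (x j) (t j) \<le> birkhoff_int f \<phi> (f (glue_start t g j) y) (t j) + K"
    if "j < k" for j
  proof -
    have "bowen_dist f (t j) (f (glue_start t g j) y) (x j) < \<delta>"
      using sh that unfolding shadows_def by blast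
    then have "f (glue_start t g j) y \<in> bowen_ball f (t j) (x j) \<zeta>"
      using \<open>\<delta> < \<zeta>\<close> by (simp add: bowen_ball_def bowen_dist_commute)
    then have "\<bar>birkhoff_int f \<phi> (x j) (t j) - birkhoff_int f \<phi> (f (glue_start t g j) y) (t j)\<bar> \<le> K"
      by (rule bowen[OF G[OF that]])
    then show ?thesis by linarith
  qed
  have "0 \<le> \<tau> * B" using \<open>0 \<le> \<tau>\<close> order_trans[OF abs_ge_zero \<phi>(2)] by simp
  have "(\<Sum>j<k. birkhoff_int f \<phi> (x j) (t j))
      \<le> (\<Sum>j<k. birkhoff_int f \<phi> (f (glue_start t g j) y) (t j) + K)"
    using close by (intro sum_mono) simp
  also have "\<dots> = (\<Sum>j<k. birkhoff_int f \<phi> (f (glue_start t g j) y) (t j)) + k * K"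
    by (simp add: sum.distrib)
  also have "\<dots> \<le> birkhoff_int f \<phi> y T + (real k - 1) * (\<tau> * B) + k * K"
    using birkhoff_sum_le_glued_orbit[where t = t and g = g, OF \<phi> \<open>1 \<le> k\<close> \<open>0 \<le> \<tau>\<close> assms(9) gaps, of y]
    by (simp add: T_def mult.assoc)
  also have "\<dots> \<le> k * (K + \<tau> * B) + birkhoff_int f \<phi> y T"
    using \<open>0 \<le> \<tau> * B\<close> by (simp add: algebra_simps)
  finally have "exp (\<Sum>j<k. birkhoff_int f \<phi> (x j) (t j)) \<le> exp (k * (K + \<tau> * B) + birkhoff_int f \<phi> y T)"
    by simp
  then show ?thesis by (simp add: exp_sum exp_add exp_of_nat_mult T_def)
qed

lemma sum_exp_birkhoff_le_Lambda_gap_bins: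
  assumes "continuous_on UNIV \<phi>" "0 < \<theta>" "0 \<le> T" "finite P" "0 < \<epsilon>"
    and gaps: "\<And>c i. c \<in> P \<Longrightarrow> i + 1 < k \<Longrightarrow> 0 \<le> g c i \<and> g c i \<le> \<tau>"
    and sep: "\<And>c c'. c \<in> P \<Longrightarrow> c' \<in> P \<Longrightarrow> c \<noteq> c' \<Longrightarrow>
      (\<And>i. i + 1 < k \<Longrightarrow> \<lfloor>g c i / \<epsilon>\<rfloor> = \<lfloor>g c' i / \<epsilon>\<rfloor>) \<Longrightarrow> \<theta> < bowen_dist f T (y c) (y c')"
  shows "(\<Sum>c\<in>P. exp (birkhoff_int f \<phi> (y c) T))
    \<le> real (nat (\<lfloor>\<tau> / \<epsilon>\<rfloor> + 1)) ^ (k - 1) * Lambda f \<phi> (UNIV \<times> {0..}) \<theta> 0 T"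
proof -
  define bin where "bin c = restrict (\<lambda>i. \<lfloor>g c i / \<epsilon>\<rfloor>) {..<k - 1}" for c
  define bins where "bins = (\<Pi>\<^sub>E i\<in>{..<k - 1}. {0..\<lfloor>\<tau> / \<epsilon>\<rfloor>})"
  have "\<lfloor>g c i / \<epsilon>\<rfloor> \<in> {0..\<lfloor>\<tau> / \<epsilon>\<rfloor>}" if "c \<in> P" "i < k - 1" for c i
    using gaps[OF that(1), of i] that(2) \<open>0 < \<epsilon>\<close> by (auto intro!: floor_mono divide_right_mono)
  then have "bin ` P \<subseteq> bins" unfolding bin_def bins_def image_subset_iff restrict_PiE_iff by blast
  have "(\<Sum>c\<in>P. exp (birkhoff_int f \<phi> (y c) T)) \<le> real (card bins) * Lambda f \<phi> (UNIV \<times> {0..}) \<theta> 0 T"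
  proof (rule sum_le_card_mult_by_classes[OF \<open>finite P\<close> _ \<open>bin ` P \<subseteq> bins\<close>])
    show "finite bins" unfolding bins_def by (intro finite_PiE) auto
    show "(\<Sum>c\<in>{c \<in> P. bin c = b}. exp (birkhoff_int f \<phi> (y c) T)) \<le> Lambda f \<phi> (UNIV \<times> {0..}) \<theta> 0 T"
      for b
    proof (rule sum_exp_birkhoff_le_Lambda[OF assms(1-3)])
      show "finite {c \<in> P. bin c = b}" using \<open>finite P\<close> by simp
      fix c c' assume "c \<in> {c \<in> P. bin c = b}" "c' \<in> {c \<in> P. bin c = b}" "c \<noteq> c'"
      moreover have "\<lfloor>g c i / \<epsilon>\<rfloor> = \<lfloor>g c' i / \<epsilon>\<rfloor>" if "bin c = bin c'" "i + 1 < k" for i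
        using fun_cong[OF that(1), of i] that(2) by (simp add: bin_def less_diff_conv)
      ultimately show "\<theta> < bowen_dist f T (y c) (y c')" using sep by simp
    qed
  qed
  then show ?thesis unfolding bins_def by (simp add: card_PiE)
qed

lemma prod_sum_separated_le_Lambda:
  fixes t :: "nat \<Rightarrow> real" and E :: "nat \<Rightarrow> 'a set"
  assumes \<phi>: "continuous_on UNIV \<phi>" "\<And>x. \<bar>\<phi> x\<bar> \<le> B" and G: "G \<subseteq> UNIV \<times> {0..}"
    and bowen: "\<And>x s y. (x, s) \<in> G \<Longrightarrow> y \<in> bowen_ball f s x \<zeta> \<Longrightarrow>
      \<bar>birkhoff_int f \<phi> x s - birkhoff_int f \<phi> y s\<bar> \<le> K"
    and spec: "W_spec f (G \<inter> UNIV \<times> {T0..}) \<delta> \<tau>" and "\<delta> < \<zeta>"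
    and small: "0 < \<epsilon>" "\<And>z h. 0 \<le> h \<Longrightarrow> h < \<epsilon> \<Longrightarrow> dist (f h z) z < \<gamma> - 2 * \<zeta>"
    and "1 \<le> k" "\<And>j. j < k \<Longrightarrow> T0 \<le> t j"
    and E: "\<And>j. j < k \<Longrightarrow> finite (E j) \<and> E j \<subseteq> slice G (t j) \<and> separated f (t j) \<gamma> (E j)"
  shows "(\<Prod>j<k. \<Sum>x\<in>E j. exp (Phi f \<phi> 0 x (t j)))
    \<le> (exp (K + \<tau> * B) * (real (nat (\<lfloor>\<tau> / \<epsilon>\<rfloor> + 1)) + 1)) ^ k
      * Lambda f \<phi> (UNIV \<times> {0..}) (\<zeta> - \<delta>) 0 ((\<Sum>j<k. t j) + (real k - 1) * \<tau>)"
    (is "?lhs \<le> (?D * (?N + 1)) ^ k * ?\<Lambda>")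
proof -
  let ?T = "(\<Sum>j<k. t j) + (real k - 1) * \<tau>"
  define P where "P = (\<Pi>\<^sub>E j\<in>{..<k}. E j)"
  have "0 < \<zeta> - \<delta>" "finite P" using \<open>\<delta> < \<zeta>\<close> E unfolding P_def by (auto intro: finite_PiE)
  have "0 \<le> ?\<Lambda>" using Lambda_nonneg[OF \<phi>(1) \<open>0 < \<zeta> - \<delta>\<close>] by simp
  have adm: "(c j, t j) \<in> G \<inter> UNIV \<times> {T0..}" if "c \<in> P" "j < k" for c j
    using that E[OF that(2)] assms(10)[OF that(2)] unfolding P_def slice_def by (auto simp: PiE_iff)
  obtain g y where sh: "\<And>c. c \<in> P \<Longrightarrow> shadows f \<delta> \<tau> k t c (g c) (y c)"
    and prefix: "\<And>c c' j i. c \<in> P \<Longrightarrow> c' \<in> P \<Longrightarrow> j \<le> k \<Longrightarrow> (\<And>i. i < j \<Longrightarrow> c i = c' i) \<Longrightarrow>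
      i + 1 < j \<Longrightarrow> g c i = g c' i"
    using W_spec_shadowing[where t = t and P = P, OF spec \<open>1 \<le> k\<close>] adm by blast
  show ?thesis
  proof (cases "P = {}")
    case True
    then obtain i where "i < k" "E i = {}" unfolding P_def by (auto simp: PiE_eq_empty_iff)
    then have "?lhs = 0" by (intro prod_zero bexI[of _ i]) auto
    moreover have "0 \<le> (?D * (?N + 1)) ^ k * ?\<Lambda>" using \<open>0 \<le> ?\<Lambda>\<close> by simp
    ultimately show ?thesis by linarith
  next
    case False
    then obtain c0 where "c0 \<in> P" by blast
    have t: "0 \<le> t j" if "j < k" for j using adm[OF \<open>c0 \<in> P\<close> that] G by auto
    have "0 \<le> \<tau>" using W_spec_gap_nonneg[OF spec adm[OF \<open>c0 \<in> P\<close>, of 0]] \<open>1 \<le> k\<close> by simp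
    have "0 \<le> ?T" using t \<open>0 \<le> \<tau>\<close> \<open>1 \<le> k\<close> by (intro add_nonneg_nonneg sum_nonneg mult_nonneg_nonneg) auto
    have "?lhs = (\<Sum>c\<in>P. \<Prod>j<k. exp (birkhoff_int f \<phi> (c j) (t j)))"
      unfolding P_def using E Phi_zero_radius t by (subst prod_sum_PiE) auto
    also have "\<dots> \<le> (\<Sum>c\<in>P. ?D ^ k * exp (birkhoff_int f \<phi> (y c) ?T))"
    proof (rule sum_mono)
      fix c assume "c \<in> P"
      show "(\<Prod>j<k. exp (birkhoff_int f \<phi> (c j) (t j))) \<le> ?D ^ k * exp (birkhoff_int f \<phi> (y c) ?T)"
        using sh[OF \<open>c \<in> P\<close>] adm[OF \<open>c \<in> P\<close>]
        by (intro prod_exp_birkhoff_le_shadow[OF \<phi> bowen _ \<open>\<delta> < \<zeta>\<close> _ \<open>1 \<le> k\<close> \<open>0 \<le> \<tau>\<close> t]) auto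
    qed
    also have "\<dots> = ?D ^ k * (\<Sum>c\<in>P. exp (birkhoff_int f \<phi> (y c) ?T))"
      by (simp add: sum_distrib_left)
    also have "(\<Sum>c\<in>P. exp (birkhoff_int f \<phi> (y c) ?T)) \<le> ?N ^ (k - 1) * ?\<Lambda>"
    proof (rule sum_exp_birkhoff_le_Lambda_gap_bins[OF \<phi>(1) \<open>0 < \<zeta> - \<delta>\<close> \<open>0 \<le> ?T\<close> \<open>finite P\<close> small(1)])
      show "0 \<le> g c i \<and> g c i \<le> \<tau>" if "c \<in> P" "i + 1 < k" for c i
        using sh[OF that(1)] that(2) unfolding shadows_def by blast
      show "\<zeta> - \<delta> < bowen_dist f ?T (y c) (y c')"
        if "c \<in> P" "c' \<in> P" "c \<noteq> c'" "\<And>i. i + 1 < k \<Longrightarrow> \<lfloor>g c i / \<epsilon>\<rfloor> = \<lfloor>g c' i / \<epsilon>\<rfloor>" for c c'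
        using that prefix[OF that(1,2)] E
        by (intro shadows_separated[OF sh[OF that(1)] sh[OF that(2)] small \<open>\<delta> < \<zeta>\<close> \<open>0 \<le> \<tau>\<close> t])
          (auto simp: P_def)
    qed
    also have "?N ^ (k - 1) * ?\<Lambda> \<le> (?N + 1) ^ k * ?\<Lambda>"
      using \<open>0 \<le> ?\<Lambda>\<close> power_mono[of ?N "?N + 1" "k - 1"] power_increasing[of "k - 1" k "?N + 1"]
      by (intro mult_right_mono) auto
    finally show ?thesis by (simp add: power_mult_distrib mult_left_mono mult.assoc)
  qed
qed

end

theorem proposition4p3:
  fixes f :: "real \<Rightarrow> 'a::metric_space \<Rightarrow> 'a" and \<phi> :: "'a \<Rightarrow> real"
    and G :: "('a \<times> real) set" and T0 \<delta> \<tau> \<zeta> \<gamma> :: real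
  assumes "compact (UNIV :: 'a set)"
    and "is_cont_flow f"
    and "continuous_on UNIV \<phi>"
    and "G \<subseteq> UNIV \<times> {0..}"
    and "\<delta> > 0"
    and "W_spec f (G \<inter> (UNIV \<times> {T0..})) \<delta> \<tau>"
    and "\<zeta> > \<delta>"
    and "bowen_property f \<phi> G \<zeta>"
    and "\<gamma> > 2 * \<zeta>"
  shows "\<exists>C1 > 0. \<forall>k::nat. \<forall>t :: nat \<Rightarrow> real. k \<ge> 1 \<and> (\<forall>j<k. t j \<ge> T0) \<longrightarrow>
     (\<Prod>j<k. Lambda f \<phi> G \<gamma> 0 (t j))
       \<le> C1 ^ k * Lambda f \<phi> (UNIV \<times> {0..}) (\<zeta> - \<delta>) 0 ((\<Sum>j<k. t j) + (real k - 1) * \<tau>)"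
proof -
  interpret compact_flow f using assms(1,2) by unfold_locales
  obtain B where B: "\<And>x. \<bar>\<phi> x\<bar> \<le> B" using potential_bounded[OF assms(3)] by blast
  obtain K where K: "\<And>x s y. (x, s) \<in> G \<Longrightarrow> y \<in> bowen_ball f s x \<zeta> \<Longrightarrow>
      \<bar>birkhoff_int f \<phi> x s - birkhoff_int f \<phi> y s\<bar> \<le> K"
    using assms(8) unfolding bowen_property_def by blast
  obtain \<epsilon> where \<epsilon>: "0 < \<epsilon>" "\<And>z h. 0 \<le> h \<Longrightarrow> h < \<epsilon> \<Longrightarrow> dist (f h z) z < \<gamma> - 2 * \<zeta>"
    using flow_small_time_dist[of "\<gamma> - 2 * \<zeta>"] assms(9) by auto
  define C1 where "C1 = exp (K + \<tau> * B) * (real (nat (\<lfloor>\<tau> / \<epsilon>\<rfloor> + 1)) + 1)"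
  have "(\<Prod>j<k. Lambda f \<phi> G \<gamma> 0 (t j))
      \<le> C1 ^ k * Lambda f \<phi> (UNIV \<times> {0..}) (\<zeta> - \<delta>) 0 ((\<Sum>j<k. t j) + (real k - 1) * \<tau>)"
    if "1 \<le> k" "\<forall>j<k. T0 \<le> t j" for k t
  proof (rule prod_Lambda_le[OF assms(3) _ assms(4)])
    fix E assume "\<And>j. j < k \<Longrightarrow> finite (E j) \<and> E j \<subseteq> slice G (t j) \<and> separated f (t j) \<gamma> (E j)"
    then show "(\<Prod>j<k. \<Sum>x\<in>E j. exp (Phi f \<phi> 0 x (t j))) \<le> C1 ^ k * Lambda f \<phi> (UNIV \<times> {0..}) (\<zeta> - \<delta>) 0
        ((\<Sum>j<k. t j) + (real k - 1) * \<tau>)"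
      unfolding C1_def using that assms(7)
      by (intro prod_sum_separated_le_Lambda[OF assms(3) B assms(4) K assms(6) _ \<epsilon>]) auto
  qed (use assms(5,7,9) Lambda_nonneg[OF assms(3)] in \<open>simp_all add: C1_def\<close>)
  moreover have "0 < C1" by (simp add: C1_def)
  ultimately show ?thesis by blast
qed

end
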